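(* Let $a,b,\beta\in\mathbb{C}$, $\theta\in(-\pi/2,\pi/2)$, and let $f_0,f_1$ be solutions of $$f'(x)+\Big(1-\frac{\beta}{x}\Big)f(x)=x^{-2}+af(x)^2+bf(x)^3$$ on the ray $\{x=re^{i\theta}:r\ge r_0\}$ (differentiable along the ray, with $f'=e^{-i\theta}\,\tfrac{d}{dr}$), such that $f_0(x)\to0$ and $f_1(x)\to0$ as $x\to\infty$ along the ray. Then there is a constant $C\in\mathbb{C}$ such that $f_1(x)-f_0(x)=e^{-x}x^{\beta}\big(C+o(1)\big)$ as $x\to\infty$ along the ray (principal branch of $x^\beta$). Moreover, if $C=0$ then $f_1=f_0$ for all sufficiently large $x$ on the ray. *)

theory Defs
  imports "HOL-Analysis.Analysis"
begin

definition ray_pt :: "real \<Rightarrow> real \<Rightarrow> complex" where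
  "ray_pt \<theta> r = complex_of_real r * exp (\<i> * complex_of_real \<theta>)"

definition ray_solution ::
  "complex \<Rightarrow> complex \<Rightarrow> complex \<Rightarrow> real \<Rightarrow> real \<Rightarrow> (complex \<Rightarrow> complex) \<Rightarrow> bool" where
  "ray_solution a b \<beta> \<theta> r0 f \<longleftrightarrow>
     (\<forall>r\<ge>r0. \<exists>d. ((\<lambda>s. f (ray_pt \<theta> s)) has_vector_derivative d) (at r within {r0..}) \<and>
        (let x = ray_pt \<theta> r in
          exp (- \<i> * complex_of_real \<theta>) * d + (1 - \<beta> / x) * f x
            = x powi (-2) + a * (f x)^2 + b * (f x)^3))"

end

theory Submission
  imports Defs
begin

(* Along the ray put g(r) = f(r e^{i theta}); the equation becomes
   g' = e^{i theta} (x^-2 - g + (beta/x + a g + b g^2) g).  Since Re e^{i theta} = cos theta > 0,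
   the linear part damps, and a Gronwall argument for |g|^2 shows that every solution tending
   to 0 is O(r^-2).  The quotient Phi = (f1 - f0) / (e^-x x^beta) then solves the linear equation
   Phi' = kappa Phi with kappa = e^{i theta} (a (f1 + f0) + b (f1^2 + f1 f0 + f0^2)) = O(r^-2).
   Integrability of kappa traps |Phi(t)|^2 between exp(-2L/s) |Phi(s)|^2 and exp(2L/s) |Phi(s)|^2
   for t >= s: so Phi is bounded, Phi' is integrable and Phi has a limit C, and if C = 0 the
   lower bound forces Phi(s) = 0 for all large s. *)

lemma gronwall_exp_bound:
  fixes N N' \<phi> \<phi>' :: "real \<Rightarrow> real"
  assumes N: "\<And>x. s \<le> x \<Longrightarrow> (N has_real_derivative N' x) (at x)"
    and \<phi>: "\<And>x. s \<le> x \<Longrightarrow> (\<phi> has_real_derivative \<phi>' x) (at x)"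
    and N'_le: "\<And>x. s \<le> x \<Longrightarrow> N' x \<le> \<phi>' x * N x"
    and "s \<le> t"
  shows "N t \<le> N s * exp (\<phi> t - \<phi> s)"
proof -
  define u where "u x = N x * exp (- \<phi> x)" for x
  have "u t \<le> u s"
  proof (rule DERIV_nonpos_imp_nonincreasing[OF \<open>s \<le> t\<close>])
    fix x assume "s \<le> x" "x \<le> t"
    have "(u has_real_derivative (N' x - \<phi>' x * N x) * exp (- \<phi> x)) (at x)"
      unfolding u_def[abs_def] using N[OF \<open>s \<le> x\<close>] \<phi>[OF \<open>s \<le> x\<close>]
      by (auto intro!: derivative_eq_intros simp: algebra_simps)
    moreover have "(N' x - \<phi>' x * N x) * exp (- \<phi> x) \<le> 0"
      using N'_le[OF \<open>s \<le> x\<close>] by (simp add: mult_nonpos_nonneg)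
    ultimately show "\<exists>y. (u has_real_derivative y) (at x) \<and> y \<le> 0" by blast
  qed
  then show ?thesis unfolding u_def by (simp add: exp_diff exp_minus field_simps)
qed

lemma has_real_derivative_norm_squared:
  fixes g :: "real \<Rightarrow> complex"
  assumes "(g has_vector_derivative D) (at t)"
  shows "((\<lambda>t. (cmod (g t))\<^sup>2) has_real_derivative 2 * Re (D * cnj (g t))) (at t)"
proof -
  have "((\<lambda>t. Re (g t * cnj (g t))) has_real_derivative Re (g t * cnj D + D * cnj (g t))) (at t)"
    by (intro derivative_intros assms)
  moreover have "Re (g t * cnj D + D * cnj (g t)) = 2 * Re (D * cnj (g t))"
    by (simp add: algebra_simps)
  ultimately show ?thesis
    by (simp add: complex_norm_square[symmetric] del: of_real_power)
qed

lemma convergent_at_top_if_Cauchy_bound: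
  fixes F :: "real \<Rightarrow> 'a::complete_space"
  assumes "\<And>s t. s0 \<le> s \<Longrightarrow> s \<le> t \<Longrightarrow> dist (F t) (F s) \<le> A / s"
  shows "\<exists>C. (F \<longlongrightarrow> C) at_top"
proof -
  have "cauchy_filter (filtermap F at_top)"
    unfolding cauchy_filter_metric_filtermap
  proof (intro allI impI)
    fix e :: real assume "e > 0"
    define S where "S = max s0 (\<bar>A\<bar> / e + 1)"
    have close: "dist (F x) (F y) < e" if "S \<le> y" "y \<le> x" for x y
    proof -
      have "0 \<le> \<bar>A\<bar> / e" using \<open>e > 0\<close> by simp
      then have "\<bar>A\<bar> / e < y" "0 < y" using that unfolding S_def by linarith+
      then have "A / y < e"
        using \<open>e > 0\<close> by (simp add: divide_less_eq mult.commute abs_less_iff)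
      with assms[of y x] that show ?thesis unfolding S_def by simp
    qed
    have "dist (F x) (F y) < e" if "S \<le> x" "S \<le> y" for x y
      using close[of y x] close[of x y] that by (cases "y \<le> x") (auto simp: dist_commute)
    then show "\<exists>P. eventually P at_top \<and> (\<forall>x y. P x \<and> P y \<longrightarrow> dist (F x) (F y) < e)"
      by (intro exI[of _ "\<lambda>x. S \<le> x"]) auto
  qed
  then show ?thesis
    using cauchy_filter_convergent by (auto simp: convergent_filter_iff filterlim_def)
qed

lemma convergent_at_top_if_deriv_bound:
  fixes F F' :: "real \<Rightarrow> 'a::banach"
  assumes "s0 > 0"
    and F': "\<And>t. s0 \<le> t \<Longrightarrow> (F has_vector_derivative F' t) (at t)"
    and bound: "\<And>t. s0 \<le> t \<Longrightarrow> norm (F' t) \<le> A / t\<^sup>2"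
  shows "\<exists>C. (F \<longlongrightarrow> C) at_top"
proof (rule convergent_at_top_if_Cauchy_bound)
  fix s t assume "s0 \<le> s" "s \<le> t"
  have "0 \<le> A / s0\<^sup>2" using bound[of s0] norm_ge_zero order_trans by blast
  then have "A \<ge> 0" using \<open>s0 > 0\<close> by (simp add: zero_le_divide_iff)
  have "s > 0" using \<open>s0 > 0\<close> \<open>s0 \<le> s\<close> by linarith
  have "norm (F t - F s) \<le> - A / t - - A / s"
  proof (cases "s = t")
    case False
    then have "s < t" using \<open>s \<le> t\<close> by simp
    show ?thesis
    proof (rule differentiable_bound_general[OF \<open>s < t\<close>, where f' = F' and \<phi>' = "\<lambda>x. A / x\<^sup>2"])
      show "continuous_on {s..t} F"
        using F' \<open>s0 \<le> s\<close>
        by (meson atLeastAtMost_iff continuous_at_imp_continuous_on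
            has_vector_derivative_continuous order_trans)
      show "continuous_on {s..t} (\<lambda>x. - A / x)"
        using \<open>s > 0\<close> by (intro continuous_intros) auto
      fix x assume "s < x" "x < t"
      then show "(F has_vector_derivative F' x) (at x)" "norm (F' x) \<le> A / x\<^sup>2"
        using F' bound \<open>s0 \<le> s\<close> by auto
      show "((\<lambda>x. - A / x) has_vector_derivative A / x\<^sup>2) (at x)"
        using \<open>s < x\<close> \<open>s > 0\<close> unfolding has_real_derivative_iff_has_vector_derivative[symmetric]
        by (auto intro!: derivative_eq_intros simp: power2_eq_square)
    qed
  qed simp
  also have "\<dots> \<le> A / s" using \<open>A \<ge> 0\<close> \<open>s \<le> t\<close> \<open>s > 0\<close> by simp
  finally show "dist (F t) (F s) \<le> A / s" by (simp add: dist_norm)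
qed

lemma eventually_exp_neg_le_inverse_power:
  fixes k :: real
  assumes "k > 0"
  shows "\<forall>\<^sub>F t in at_top. exp (- (k * t)) \<le> 1 / t ^ n"
proof -
  have "((\<lambda>t. (k * t) ^ n / exp (k * t)) \<longlongrightarrow> 0) at_top"
    by (rule filterlim_compose[OF tendsto_power_div_exp_0])
      (rule filterlim_tendsto_pos_mult_at_top[OF tendsto_const assms filterlim_ident])
  from tendsto_divide[OF this tendsto_const[of "k ^ n"]]
  have "((\<lambda>t. t ^ n * exp (- (k * t))) \<longlongrightarrow> 0) at_top"
    using assms by (simp add: exp_minus field_simps)
  then have "\<forall>\<^sub>F t in at_top. t ^ n * exp (- (k * t)) < 1"
    by (rule order_tendstoD(2)) simp
  then show ?thesis
    using eventually_gt_at_top[of 0]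
    by eventually_elim (simp add: field_simps)
qed

lemma inverse_power4_supersolution:
  fixes k A w w' x :: real
  assumes "k > 0" "8 / k \<le> x" and w': "w' \<le> - k * w + A / x ^ 4"
  shows "w' + 4 * (2 * \<bar>A\<bar> / k) / x ^ 5 \<le> - k * (w - 2 * \<bar>A\<bar> / k / x ^ 4)"
proof -
  define M where "M = 2 * \<bar>A\<bar> / k"
  have "M \<ge> 0" using \<open>k > 0\<close> unfolding M_def by simp
  have "8 / k > 0" using \<open>k > 0\<close> by simp
  then have "x > 0" using assms(2) by linarith
  have "4 / x \<le> k / 2" using assms(2) \<open>x > 0\<close> \<open>k > 0\<close> by (simp add: field_simps)
  then have "(4 / x) * (M / x ^ 4) \<le> (k / 2) * (M / x ^ 4)"
    using \<open>M \<ge> 0\<close> \<open>x > 0\<close> by (intro mult_right_mono) auto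
  moreover have "A / x ^ 4 \<le> (k / 2) * (M / x ^ 4)"
    using \<open>k > 0\<close> \<open>x > 0\<close> by (simp add: M_def divide_right_mono)
  moreover have "4 * M / x ^ 5 = (4 / x) * (M / x ^ 4)"
    using \<open>x > 0\<close> by (simp add: field_simps eval_nat_numeral)
  moreover have "- k * (w - M / x ^ 4) = - k * w + 2 * ((k / 2) * (M / x ^ 4))"
    by (simp add: algebra_simps)
  ultimately show ?thesis using w' unfolding M_def[symmetric] by linarith
qed

lemma decay_of_differential_inequality:
  fixes w w' :: "real \<Rightarrow> real"
  assumes "k > 0"
    and "\<forall>\<^sub>F t in at_top. (w has_real_derivative w' t) (at t) \<and> w' t \<le> - k * w t + A / t ^ 4"
  shows "\<exists>K. \<forall>\<^sub>F t in at_top. w t \<le> K / t ^ 4"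
proof -
  obtain s where "s \<ge> 8 / k" and s:
    "\<And>t. s \<le> t \<Longrightarrow> (w has_real_derivative w' t) (at t) \<and> w' t \<le> - k * w t + A / t ^ 4"
    using eventually_conj[OF assms(2) eventually_ge_at_top[of "8 / k"]]
    unfolding eventually_at_top_linorder by blast
  have "8 / k > 0" using \<open>k > 0\<close> by simp
  then have "s > 0" using \<open>s \<ge> 8 / k\<close> by linarith
  define M where "M = 2 * \<bar>A\<bar> / k"
  define W where "W t = w t - M / t ^ 4" for t
  have W_bound: "W t \<le> W s * exp (- k * t - - k * s)" if "s \<le> t" for t
  proof (rule gronwall_exp_bound[OF _ _ _ that, where N' = "\<lambda>x. w' x + 4 * M / x ^ 5"])
    fix x assume "s \<le> x"
    then have "x > 0" using \<open>s > 0\<close> by linarith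
    show "(W has_real_derivative w' x + 4 * M / x ^ 5) (at x)"
      unfolding W_def[abs_def] using s[OF \<open>s \<le> x\<close>] \<open>x > 0\<close>
      by (auto intro!: derivative_eq_intros simp: field_simps eval_nat_numeral)
    show "((\<lambda>x. - k * x) has_real_derivative - k) (at x)"
      by (auto intro!: derivative_eq_intros)
    show "w' x + 4 * M / x ^ 5 \<le> - k * W x"
      using inverse_power4_supersolution[OF \<open>k > 0\<close> _ conjunct2[OF s[OF \<open>s \<le> x\<close>]]]
        \<open>s \<ge> 8 / k\<close> \<open>s \<le> x\<close> unfolding W_def M_def by simp
  qed
  define Y where "Y = max 0 (W s * exp (k * s))"
  have "\<forall>\<^sub>F t in at_top. w t \<le> (M + Y) / t ^ 4"
    using eventually_ge_at_top[of s] eventually_exp_neg_le_inverse_power[OF \<open>k > 0\<close>, of 4]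
  proof eventually_elim
    case (elim t)
    then have "t > 0" using \<open>s > 0\<close> by linarith
    have "W t \<le> W s * exp (k * s) * exp (- (k * t))"
      using W_bound[OF \<open>s \<le> t\<close>] by (simp add: mult.assoc exp_add[symmetric])
    also have "\<dots> \<le> Y * (1 / t ^ 4)"
      unfolding Y_def using elim(2) by (intro mult_mono) auto
    finally show ?case unfolding W_def by (simp add: add_divide_distrib)
  qed
  then show ?thesis by blast
qed

lemma Re_damped_mult_cnj_le:
  fixes p g q \<kappa> :: complex
  assumes "Re \<kappa> > 0" "cmod p \<le> P" "cmod q \<le> Re \<kappa> / 2"
  shows "2 * Re ((p - \<kappa> * g + q * g) * cnj g) \<le> - (Re \<kappa> / 2) * (cmod g)\<^sup>2 + 2 * P\<^sup>2 / Re \<kappa>"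
proof -
  define c where "c = Re \<kappa>"
  define G where "G = cmod g"
  have "(p - \<kappa> * g + q * g) * cnj g = p * cnj g + (q - \<kappa>) * of_real (G\<^sup>2)"
    unfolding G_def complex_norm_square by (simp add: algebra_simps)
  then have "Re ((p - \<kappa> * g + q * g) * cnj g) = Re (p * cnj g + (q - \<kappa>) * of_real (G\<^sup>2))"
    by simp
  also have "\<dots> = Re (p * cnj g) - c * G\<^sup>2 + Re q * G\<^sup>2"
    unfolding c_def by (simp del: of_real_power add: algebra_simps)
  finally have "Re ((p - \<kappa> * g + q * g) * cnj g) = Re (p * cnj g) - c * G\<^sup>2 + Re q * G\<^sup>2" .
  moreover have "Re (p * cnj g) \<le> P * G"
  proof -
    have "Re (p * cnj g) \<le> cmod p * G"
      using complex_Re_le_cmod[of "p * cnj g"] unfolding G_def by (simp add: norm_mult)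
    also have "\<dots> \<le> P * G"
      using assms(2) unfolding G_def by (intro mult_right_mono) auto
    finally show ?thesis .
  qed
  moreover have "Re q * G\<^sup>2 \<le> c / 2 * G\<^sup>2"
    using complex_Re_le_cmod[of q] assms(3) unfolding c_def by (intro mult_right_mono) auto
  moreover have "2 * (P * G) \<le> c / 2 * G\<^sup>2 + 2 * P\<^sup>2 / c"
  proof -
    have "0 \<le> (c * G - 2 * P)\<^sup>2 / (2 * c)" using assms(1) unfolding c_def by simp
    also have "\<dots> = c / 2 * G\<^sup>2 + 2 * P\<^sup>2 / c - 2 * (P * G)"
      using assms(1) unfolding c_def by (simp add: power2_diff field_simps power2_eq_square)
    finally show ?thesis by simp
  qed
  ultimately show ?thesis unfolding c_def G_def by linarith
qed

lemma perturbed_linear_ode_decay: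
  fixes g p q :: "real \<Rightarrow> complex" and \<kappa> :: complex
  assumes "Re \<kappa> > 0"
    and g': "\<forall>\<^sub>F t in at_top. (g has_vector_derivative p t - \<kappa> * g t + q t * g t) (at t)"
    and p: "\<forall>\<^sub>F t in at_top. cmod (p t) \<le> P / t\<^sup>2"
    and q: "(q \<longlongrightarrow> 0) at_top"
  shows "\<exists>K. \<forall>\<^sub>F t in at_top. cmod (g t) \<le> K / t\<^sup>2"
proof -
  define c where "c = Re \<kappa>"
  have "c > 0" using assms(1) unfolding c_def .
  have q_small: "\<forall>\<^sub>F t in at_top. cmod (q t) \<le> c / 2"
    using order_tendstoD(2)[OF tendsto_norm_zero[OF q], of "c / 2"] \<open>c > 0\<close>
    by (auto elim: eventually_mono)
  define w where "w t = (cmod (g t))\<^sup>2" for t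
  define w' where "w' t = 2 * Re ((p t - \<kappa> * g t + q t * g t) * cnj (g t))" for t
  have "\<forall>\<^sub>F t in at_top. (w has_real_derivative w' t) (at t) \<and>
      w' t \<le> - (c / 2) * w t + (2 * P\<^sup>2 / c) / t ^ 4"
    using g' p q_small
  proof eventually_elim
    case (elim t)
    have "(w has_real_derivative w' t) (at t)"
      unfolding w_def[abs_def] w'_def by (rule has_real_derivative_norm_squared[OF elim(1)])
    moreover have "2 * (P / t\<^sup>2)\<^sup>2 / Re \<kappa> = (2 * P\<^sup>2 / Re \<kappa>) / t ^ 4"
      by (simp add: power_divide flip: power_mult)
    with Re_damped_mult_cnj_le[OF assms(1) elim(2,3)[unfolded c_def]]
    have "w' t \<le> - (c / 2) * w t + (2 * P\<^sup>2 / c) / t ^ 4"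
      unfolding w_def w'_def c_def by simp
    ultimately show ?case by blast
  qed
  then obtain K where "\<forall>\<^sub>F t in at_top. w t \<le> K / t ^ 4"
    using decay_of_differential_inequality[of "c / 2" w w' "2 * P\<^sup>2 / c"] \<open>c > 0\<close> by auto
  then have "\<forall>\<^sub>F t in at_top. cmod (g t) \<le> sqrt K / t\<^sup>2"
  proof eventually_elim
    case (elim t)
    then have "cmod (g t) \<le> sqrt (K / (t\<^sup>2)\<^sup>2)"
      unfolding w_def by (intro real_le_rsqrt) (simp flip: power_mult)
    then show ?case by (simp only: real_sqrt_divide real_sqrt_abs abs_power2)
  qed
  then show ?thesis by blast
qed

lemma abs_Re_mult_cnj_le: "\<bar>Re (z * k * cnj z)\<bar> \<le> cmod k * (cmod z)\<^sup>2"
  using abs_Re_le_cmod[of "z * k * cnj z"] by (simp add: norm_mult power2_eq_square mult_ac)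

lemma linear_ode_norm_squared_bounds:
  fixes \<Phi> \<kappa> :: "real \<Rightarrow> complex"
  assumes "R > 0"
    and \<Phi>': "\<And>t. R \<le> t \<Longrightarrow> (\<Phi> has_vector_derivative \<Phi> t * \<kappa> t) (at t)"
    and \<kappa>: "\<And>t. R \<le> t \<Longrightarrow> cmod (\<kappa> t) \<le> L / t\<^sup>2"
    and "R \<le> s" "s \<le> t"
  shows "(cmod (\<Phi> s))\<^sup>2 * exp (- (2 * L / s)) \<le> (cmod (\<Phi> t))\<^sup>2"
    and "(cmod (\<Phi> t))\<^sup>2 \<le> (cmod (\<Phi> s))\<^sup>2 * exp (2 * L / s)"
proof -
  define N where "N t = (cmod (\<Phi> t))\<^sup>2" for t
  define N' where "N' t = 2 * Re (\<Phi> t * \<kappa> t * cnj (\<Phi> t))" for t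
  have "s > 0" using \<open>R > 0\<close> \<open>R \<le> s\<close> by linarith
  have "0 \<le> L / s\<^sup>2" using \<kappa>[OF \<open>R \<le> s\<close>] norm_ge_zero order_trans by blast
  then have "L \<ge> 0" using \<open>s > 0\<close> by (simp add: zero_le_divide_iff)
  have N': "(N has_real_derivative N' x) (at x)" if "s \<le> x" for x
    unfolding N_def[abs_def] N'_def
    using has_real_derivative_norm_squared[OF \<Phi>'] that \<open>R \<le> s\<close> by simp
  have N'_bound: "\<bar>N' x\<bar> \<le> 2 * L / x\<^sup>2 * N x" if "s \<le> x" for x
  proof -
    have "\<bar>N' x\<bar> \<le> 2 * (cmod (\<kappa> x) * N x)"
      unfolding N'_def N_def using abs_Re_mult_cnj_le[of "\<Phi> x" "\<kappa> x"] by simp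
    also have "\<dots> \<le> 2 * (L / x\<^sup>2 * N x)"
      unfolding N_def using \<kappa>[of x] that \<open>R \<le> s\<close> by (intro mult_left_mono mult_right_mono) auto
    finally show ?thesis by simp
  qed
  have inverse_deriv: "((\<lambda>x. c / x) has_real_derivative - c / x\<^sup>2) (at x)" if "s \<le> x" for c x
    using that \<open>s > 0\<close> by (auto intro!: derivative_eq_intros simp: power2_eq_square)
  have lower: "- N t \<le> - N s * exp (2 * L / t - 2 * L / s)"
  proof (rule gronwall_exp_bound[OF _ inverse_deriv _ \<open>s \<le> t\<close>])
    fix x assume "s \<le> x"
    show "((\<lambda>x. - N x) has_real_derivative - N' x) (at x)"
      using N'[OF \<open>s \<le> x\<close>] by (rule DERIV_minus)
    show "- N' x \<le> - (2 * L) / x\<^sup>2 * - N x"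
      using N'_bound[OF \<open>s \<le> x\<close>] by (simp add: abs_le_iff)
  qed
  moreover have "N s * exp (- (2 * L / s)) \<le> N s * exp (2 * L / t - 2 * L / s)"
    using \<open>L \<ge> 0\<close> \<open>s > 0\<close> \<open>s \<le> t\<close> unfolding N_def by (intro mult_left_mono) auto
  ultimately show "(cmod (\<Phi> s))\<^sup>2 * exp (- (2 * L / s)) \<le> (cmod (\<Phi> t))\<^sup>2"
    unfolding N_def by linarith
  have "N t \<le> N s * exp (- (2 * L) / t - - (2 * L) / s)"
  proof (rule gronwall_exp_bound[OF N' inverse_deriv _ \<open>s \<le> t\<close>])
    fix x assume "s \<le> x"
    show "N' x \<le> - (- (2 * L)) / x\<^sup>2 * N x"
      using N'_bound[OF \<open>s \<le> x\<close>] by (simp add: abs_le_iff)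
  qed
  moreover have "N s * exp (- (2 * L) / t - - (2 * L) / s) \<le> N s * exp (2 * L / s)"
    using \<open>L \<ge> 0\<close> \<open>s > 0\<close> \<open>s \<le> t\<close> unfolding N_def by (intro mult_left_mono) auto
  ultimately show "(cmod (\<Phi> t))\<^sup>2 \<le> (cmod (\<Phi> s))\<^sup>2 * exp (2 * L / s)"
    unfolding N_def by linarith
qed

lemma linear_ode_limit:
  fixes \<Phi> \<kappa> :: "real \<Rightarrow> complex"
  assumes "\<forall>\<^sub>F t in at_top. (\<Phi> has_vector_derivative \<Phi> t * \<kappa> t) (at t) \<and> cmod (\<kappa> t) \<le> L / t\<^sup>2"
  shows "\<exists>C. (\<Phi> \<longlongrightarrow> C) at_top \<and> (C = 0 \<longrightarrow> (\<forall>\<^sub>F t in at_top. \<Phi> t = 0))"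
proof -
  obtain R where R: "\<And>t. R \<le> t \<Longrightarrow>
      ((\<Phi> has_vector_derivative \<Phi> t * \<kappa> t) (at t) \<and> cmod (\<kappa> t) \<le> L / t\<^sup>2) \<and> t > 0"
    using eventually_conj[OF assms eventually_gt_at_top[of 0]]
    unfolding eventually_at_top_linorder by blast
  have "R > 0" using R[OF order.refl] by simp
  have \<Phi>': "(\<Phi> has_vector_derivative \<Phi> t * \<kappa> t) (at t)"
    and \<kappa>: "cmod (\<kappa> t) \<le> L / t\<^sup>2" if "R \<le> t" for t
    using R[OF that] by auto
  have lower: "(cmod (\<Phi> s))\<^sup>2 * exp (- (2 * L / s)) \<le> (cmod (\<Phi> t))\<^sup>2"
    and upper: "(cmod (\<Phi> t))\<^sup>2 \<le> (cmod (\<Phi> s))\<^sup>2 * exp (2 * L / s)" if "R \<le> s" "s \<le> t" for s t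
    using linear_ode_norm_squared_bounds[of R \<Phi> \<kappa> L s t] \<open>R > 0\<close> \<Phi>' \<kappa> that by blast+
  define B where "B = cmod (\<Phi> R) * exp (L / R)"
  have "B \<ge> 0" unfolding B_def by simp
  have \<Phi>_bounded: "cmod (\<Phi> t) \<le> B" if "R \<le> t" for t
  proof (rule power2_le_imp_le[OF _ \<open>B \<ge> 0\<close>])
    have "exp (2 * L / R) = (exp (L / R))\<^sup>2"
      by (simp flip: exp_double)
    then show "(cmod (\<Phi> t))\<^sup>2 \<le> B\<^sup>2"
      using upper[OF order.refl that] unfolding B_def by (simp add: power_mult_distrib)
  qed
  have deriv_bound: "norm (\<Phi> t * \<kappa> t) \<le> B * L / t\<^sup>2" if "R \<le> t" for t
  proof -
    have "norm (\<Phi> t * \<kappa> t) \<le> B * (L / t\<^sup>2)"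
      unfolding norm_mult using \<Phi>_bounded[OF that] \<kappa>[OF that] \<open>B \<ge> 0\<close> by (intro mult_mono) auto
    then show ?thesis by simp
  qed
  then obtain C where C: "(\<Phi> \<longlongrightarrow> C) at_top"
    using convergent_at_top_if_deriv_bound[OF \<open>R > 0\<close>, of \<Phi> "\<lambda>t. \<Phi> t * \<kappa> t"] \<Phi>' deriv_bound
    by blast
  have "\<Phi> s = 0" if "C = 0" "R \<le> s" for s
  proof -
    have "((\<lambda>t. (cmod (\<Phi> t))\<^sup>2) \<longlongrightarrow> (cmod C)\<^sup>2) at_top"
      by (intro tendsto_intros C)
    then have "(cmod (\<Phi> s))\<^sup>2 * exp (- (2 * L / s)) \<le> (cmod C)\<^sup>2"
      by (rule tendsto_lowerbound)
        (use lower \<open>R \<le> s\<close> in \<open>auto simp: eventually_at_top_linorder\<close>)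
    then show "\<Phi> s = 0" using \<open>C = 0\<close> by (simp add: mult_le_0_iff)
  qed
  then show ?thesis
    using C by (auto simp: eventually_at_top_linorder)
qed

lemma norm_ray_pt [simp]: "cmod (ray_pt \<theta> r) = \<bar>r\<bar>"
  by (simp add: ray_pt_def norm_mult)

lemma ray_pt_at_infinity: "filterlim (ray_pt \<theta>) at_infinity at_top"
  by (rule filterlim_norm_at_top_imp_at_infinity) (simp add: filterlim_abs_real)

lemma Ln_ray_pt:
  assumes "r > 0" "- pi < \<theta>" "\<theta> \<le> pi"
  shows "Ln (ray_pt \<theta> r) = of_real (ln r) + \<i> * of_real \<theta>"
proof -
  have "ray_pt \<theta> r = exp (of_real (ln r) + \<i> * of_real \<theta>)"
    using assms(1) unfolding ray_pt_def by (simp add: exp_add exp_of_real)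
  then show ?thesis using assms(2,3) by simp
qed

definition ray_weight :: "complex \<Rightarrow> real \<Rightarrow> real \<Rightarrow> complex" where
  "ray_weight \<beta> \<theta> r = exp (- ray_pt \<theta> r) * ray_pt \<theta> r powr \<beta>"

lemma inverse_ray_weight:
  assumes "r > 0" "- pi < \<theta>" "\<theta> \<le> pi"
  shows "inverse (ray_weight \<beta> \<theta> r) =
    exp (of_real r * exp (\<i> * of_real \<theta>) - \<beta> * (of_real (ln r) + \<i> * of_real \<theta>))"
proof -
  have "ray_pt \<theta> r \<noteq> 0" using assms(1) by (simp add: ray_pt_def)
  then show ?thesis
    unfolding ray_weight_def powr_def Ln_ray_pt[OF assms]
    by (simp add: ray_pt_def exp_diff exp_minus field_simps)
qed

lemma inverse_ray_weight_has_vector_derivative: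
  assumes "r > 0" "- pi < \<theta>" "\<theta> \<le> pi"
  shows "((\<lambda>r. inverse (ray_weight \<beta> \<theta> r)) has_vector_derivative
      (exp (\<i> * of_real \<theta>) - \<beta> / of_real r) * inverse (ray_weight \<beta> \<theta> r)) (at r)"
proof -
  define \<phi> where "\<phi> r = of_real r * exp (\<i> * of_real \<theta>) - \<beta> * (of_real (ln r) + \<i> * of_real \<theta>)" for r
  have "(\<phi> has_vector_derivative exp (\<i> * of_real \<theta>) - \<beta> / of_real r) (at r)"
    unfolding \<phi>_def[abs_def] using assms(1)
    by (auto intro!: derivative_eq_intros simp: field_simps)
  from field_vector_diff_chain_at[OF this DERIV_exp]
  have "((exp \<circ> \<phi>) has_vector_derivative
      (exp (\<i> * of_real \<theta>) - \<beta> / of_real r) * inverse (ray_weight \<beta> \<theta> r)) (at r)"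
    using inverse_ray_weight[OF assms] by (simp add: \<phi>_def)
  then show ?thesis
  proof (rule has_vector_derivative_transform_within_open[where S = "{0<..}"])
    show "(exp \<circ> \<phi>) x = inverse (ray_weight \<beta> \<theta> x)" if "x \<in> {0<..}" for x
      using inverse_ray_weight[of x] that assms(2,3) unfolding \<phi>_def by simp
  qed (use assms in auto)
qed

lemma ray_solution_has_vector_derivative:
  assumes "ray_solution a b \<beta> \<theta> r0 f" "r0 < r"
  shows "((\<lambda>s. f (ray_pt \<theta> s)) has_vector_derivative exp (\<i> * of_real \<theta>) *
      (ray_pt \<theta> r powi (-2) - (1 - \<beta> / ray_pt \<theta> r) * f (ray_pt \<theta> r)
        + a * (f (ray_pt \<theta> r))\<^sup>2 + b * (f (ray_pt \<theta> r)) ^ 3)) (at r)"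
proof -
  obtain d where d: "((\<lambda>s. f (ray_pt \<theta> s)) has_vector_derivative d) (at r within {r0..})"
    and ode: "exp (- \<i> * of_real \<theta>) * d + (1 - \<beta> / ray_pt \<theta> r) * f (ray_pt \<theta> r)
      = ray_pt \<theta> r powi (-2) + a * (f (ray_pt \<theta> r))\<^sup>2 + b * (f (ray_pt \<theta> r)) ^ 3"
    using assms(1) less_imp_le[OF assms(2)] unfolding ray_solution_def Let_def by blast
  have "at r within {r0..} = at r"
    using assms(2) by (intro at_within_interior) simp
  with d have deriv: "((\<lambda>s. f (ray_pt \<theta> s)) has_vector_derivative d) (at r)" by simp
  have d_eq: "d = exp (\<i> * of_real \<theta>) * (exp (- \<i> * of_real \<theta>) * d)"
    by (simp add: mult.assoc[symmetric] flip: exp_add)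
  have ode': "exp (- \<i> * of_real \<theta>) * d = ray_pt \<theta> r powi (-2) - (1 - \<beta> / ray_pt \<theta> r) * f (ray_pt \<theta> r)
      + a * (f (ray_pt \<theta> r))\<^sup>2 + b * (f (ray_pt \<theta> r)) ^ 3"
  proof -
    have "exp (- \<i> * of_real \<theta>) * d = ray_pt \<theta> r powi (-2) + a * (f (ray_pt \<theta> r))\<^sup>2
        + b * (f (ray_pt \<theta> r)) ^ 3 - (1 - \<beta> / ray_pt \<theta> r) * f (ray_pt \<theta> r)"
      using ode by (simp only: eq_diff_eq)
    then show ?thesis by (simp add: algebra_simps)
  qed
  show ?thesis using deriv by (simp only: ode'[symmetric] d_eq[symmetric])
qed

lemma ray_solution_decay:
  assumes "- (pi / 2) < \<theta>" "\<theta> < pi / 2" and sol: "ray_solution a b \<beta> \<theta> r0 f"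
    and lim: "((\<lambda>r. f (ray_pt \<theta> r)) \<longlongrightarrow> 0) at_top"
  shows "\<exists>K. \<forall>\<^sub>F r in at_top. cmod (f (ray_pt \<theta> r)) \<le> K / r\<^sup>2"
proof -
  define e where "e = exp (\<i> * of_real \<theta>)"
  define g where "g r = f (ray_pt \<theta> r)" for r
  have "Re e > 0" unfolding e_def using cos_gt_zero_pi[OF assms(1,2)] by (simp add: Re_exp)
  show ?thesis unfolding g_def[symmetric]
  proof (rule perturbed_linear_ode_decay[OF \<open>Re e > 0\<close>,
        where p = "\<lambda>r. e * ray_pt \<theta> r powi (-2)"
          and q = "\<lambda>r. e * (\<beta> / ray_pt \<theta> r + a * g r + b * (g r)\<^sup>2)"])
    show "\<forall>\<^sub>F r in at_top. (g has_vector_derivative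
        e * ray_pt \<theta> r powi (-2) - e * g r + e * (\<beta> / ray_pt \<theta> r + a * g r + b * (g r)\<^sup>2) * g r) (at r)"
      using eventually_gt_at_top[of r0]
    proof eventually_elim
      case (elim r)
      show ?case
        using ray_solution_has_vector_derivative[OF sol elim] unfolding g_def[symmetric] e_def
        by (simp add: algebra_simps power2_eq_square power3_eq_cube)
    qed
    show "\<forall>\<^sub>F r in at_top. cmod (e * ray_pt \<theta> r powi (-2)) \<le> 1 / r\<^sup>2"
      by (simp add: e_def norm_mult norm_power_int power_int_minus norm_inverse norm_power divide_inverse)
    have "((\<lambda>r. \<beta> / ray_pt \<theta> r) \<longlongrightarrow> 0) at_top"
      by (rule tendsto_divide_0[OF tendsto_const ray_pt_at_infinity])
    then have "((\<lambda>r. e * (\<beta> / ray_pt \<theta> r + a * g r + b * (g r)\<^sup>2)) \<longlongrightarrow> e * (0 + a * 0 + b * 0\<^sup>2)) at_top"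
      using lim unfolding g_def by (intro tendsto_intros)
    then show "((\<lambda>r. e * (\<beta> / ray_pt \<theta> r + a * g r + b * (g r)\<^sup>2)) \<longlongrightarrow> 0) at_top"
      by simp
  qed
qed

lemma difference_coefficient_bound:
  fixes a b u v :: complex
  assumes "cmod u + cmod v \<le> 1"
  shows "cmod (a * (u + v) + b * (u\<^sup>2 + u * v + v\<^sup>2)) \<le> (cmod a + cmod b) * (cmod u + cmod v)"
proof -
  have "cmod (u\<^sup>2 + u * v + v\<^sup>2) \<le> (cmod u + cmod v)\<^sup>2"
    by (rule order_trans[OF norm_triangle_le[OF add_mono[OF norm_triangle_ineq order_refl]]])
      (simp add: norm_mult norm_power power2_eq_square algebra_simps)
  also have "\<dots> \<le> cmod u + cmod v"
    using assms by (simp add: power2_eq_square mult_left_le)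
  finally have "cmod (b * (u\<^sup>2 + u * v + v\<^sup>2)) \<le> cmod b * (cmod u + cmod v)"
    unfolding norm_mult by (intro mult_left_mono) auto
  moreover have "cmod (a * (u + v)) \<le> cmod a * (cmod u + cmod v)"
    unfolding norm_mult by (intro mult_left_mono norm_triangle_ineq) auto
  ultimately show ?thesis
    using norm_triangle_ineq[of "a * (u + v)" "b * (u\<^sup>2 + u * v + v\<^sup>2)"]
    unfolding distrib_right by linarith
qed

lemma ray_solutions_difference_ode:
  assumes "- pi < \<theta>" "\<theta> \<le> pi" "0 < r" "r0 < r"
    and sol0: "ray_solution a b \<beta> \<theta> r0 f0" and sol1: "ray_solution a b \<beta> \<theta> r0 f1"
  shows "((\<lambda>r. (f1 (ray_pt \<theta> r) - f0 (ray_pt \<theta> r)) / ray_weight \<beta> \<theta> r) has_vector_derivative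
      (f1 (ray_pt \<theta> r) - f0 (ray_pt \<theta> r)) / ray_weight \<beta> \<theta> r * (exp (\<i> * of_real \<theta>) *
        (a * (f1 (ray_pt \<theta> r) + f0 (ray_pt \<theta> r))
          + b * ((f1 (ray_pt \<theta> r))\<^sup>2 + f1 (ray_pt \<theta> r) * f0 (ray_pt \<theta> r) + (f0 (ray_pt \<theta> r))\<^sup>2))))
      (at r)"
proof -
  (* the forcing x^-2 cancels in f1 - f0, and the weight absorbs the linear part -(1 - beta/x) *)
  define e where "e = exp (\<i> * of_real \<theta>)"
  define X where "X = ray_pt \<theta> r"
  define u where "u = f1 X"
  define v where "v = f0 X"
  define W where "W = inverse (ray_weight \<beta> \<theta> r)"
  define c where "c = \<beta> / X"
  have "e \<noteq> 0" unfolding e_def by simp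
  have c: "\<beta> / of_real r = e * c"
    using \<open>r > 0\<close> \<open>e \<noteq> 0\<close> unfolding c_def X_def ray_pt_def e_def[symmetric] by (simp add: field_simps)
  have "((\<lambda>r. (f1 (ray_pt \<theta> r) - f0 (ray_pt \<theta> r)) * inverse (ray_weight \<beta> \<theta> r)) has_vector_derivative
      (u - v) * ((e - \<beta> / of_real r) * W)
        + (e * (X powi (-2) - (1 - c) * u + a * u\<^sup>2 + b * u ^ 3)
          - e * (X powi (-2) - (1 - c) * v + a * v\<^sup>2 + b * v ^ 3)) * W) (at r)"
    unfolding u_def v_def W_def X_def c_def e_def
    by (intro has_vector_derivative_mult has_vector_derivative_diff
        ray_solution_has_vector_derivative[OF sol1 \<open>r0 < r\<close>]
        ray_solution_has_vector_derivative[OF sol0 \<open>r0 < r\<close>]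
        inverse_ray_weight_has_vector_derivative[OF assms(3,1,2)])
  moreover have "(u - v) * ((e - \<beta> / of_real r) * W)
        + (e * (X powi (-2) - (1 - c) * u + a * u\<^sup>2 + b * u ^ 3)
          - e * (X powi (-2) - (1 - c) * v + a * v\<^sup>2 + b * v ^ 3)) * W
      = (u - v) * W * (e * (a * (u + v) + b * (u\<^sup>2 + u * v + v\<^sup>2)))"
    unfolding c by (simp add: algebra_simps power2_eq_square power3_eq_cube)
  ultimately show ?thesis
    unfolding u_def v_def W_def X_def e_def by (simp add: divide_inverse)
qed

lemma ray_solutions_difference_quotient_ode:
  assumes "- (pi / 2) < \<theta>" "\<theta> < pi / 2" "r0 > 0"
    and "ray_solution a b \<beta> \<theta> r0 f0" "ray_solution a b \<beta> \<theta> r0 f1"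
    and "((\<lambda>r. f0 (ray_pt \<theta> r)) \<longlongrightarrow> 0) at_top" "((\<lambda>r. f1 (ray_pt \<theta> r)) \<longlongrightarrow> 0) at_top"
  defines "\<Phi> \<equiv> \<lambda>r. (f1 (ray_pt \<theta> r) - f0 (ray_pt \<theta> r)) / ray_weight \<beta> \<theta> r"
  shows "\<exists>L \<kappa>. \<forall>\<^sub>F r in at_top. (\<Phi> has_vector_derivative \<Phi> r * \<kappa> r) (at r) \<and> cmod (\<kappa> r) \<le> L / r\<^sup>2"
proof -
  have \<theta>: "- pi < \<theta>" "\<theta> \<le> pi" using assms(1,2) pi_gt_zero by linarith+
  obtain K0 where K0: "\<forall>\<^sub>F r in at_top. cmod (f0 (ray_pt \<theta> r)) \<le> K0 / r\<^sup>2"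
    using ray_solution_decay[OF assms(1,2,4,6)] by blast
  obtain K1 where K1: "\<forall>\<^sub>F r in at_top. cmod (f1 (ray_pt \<theta> r)) \<le> K1 / r\<^sup>2"
    using ray_solution_decay[OF assms(1,2,5,7)] by blast
  have "((\<lambda>r. cmod (f1 (ray_pt \<theta> r)) + cmod (f0 (ray_pt \<theta> r))) \<longlongrightarrow> 0) at_top"
    using tendsto_add[OF tendsto_norm_zero[OF assms(7)] tendsto_norm_zero[OF assms(6)]] by simp
  from order_tendstoD(2)[OF this zero_less_one]
  have small: "\<forall>\<^sub>F r in at_top. cmod (f1 (ray_pt \<theta> r)) + cmod (f0 (ray_pt \<theta> r)) \<le> 1"
    by (auto elim: eventually_mono)
  define \<kappa> where "\<kappa> r = exp (\<i> * of_real \<theta>) * (a * (f1 (ray_pt \<theta> r) + f0 (ray_pt \<theta> r))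
    + b * ((f1 (ray_pt \<theta> r))\<^sup>2 + f1 (ray_pt \<theta> r) * f0 (ray_pt \<theta> r) + (f0 (ray_pt \<theta> r))\<^sup>2))" for r
  have "\<forall>\<^sub>F r in at_top. (\<Phi> has_vector_derivative \<Phi> r * \<kappa> r) (at r)
      \<and> cmod (\<kappa> r) \<le> (cmod a + cmod b) * (K1 + K0) / r\<^sup>2"
    using K0 K1 small eventually_gt_at_top[of r0]
  proof eventually_elim
    case (elim r)
    have deriv: "(\<Phi> has_vector_derivative \<Phi> r * \<kappa> r) (at r)"
      unfolding \<Phi>_def \<kappa>_def
      using ray_solutions_difference_ode[OF \<theta> _ elim(4) assms(4,5)] elim(4) assms(3) by simp
    have "cmod (\<kappa> r) \<le> (cmod a + cmod b) * (cmod (f1 (ray_pt \<theta> r)) + cmod (f0 (ray_pt \<theta> r)))"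
      unfolding \<kappa>_def norm_mult using difference_coefficient_bound[OF elim(3), of a b] by simp
    also have "\<dots> \<le> (cmod a + cmod b) * (K1 / r\<^sup>2 + K0 / r\<^sup>2)"
      using elim(1,2) by (intro mult_left_mono add_mono) auto
    also have "\<dots> = (cmod a + cmod b) * (K1 + K0) / r\<^sup>2"
      by (simp only: add_divide_distrib[symmetric] times_divide_eq_right)
    finally show ?case using deriv by simp
  qed
  then show ?thesis by blast
qed

theorem mainTheorem11:
  fixes a b \<beta> :: complex and \<theta> r0 :: real and f0 f1 :: "complex \<Rightarrow> complex"
  assumes "- (pi / 2) < \<theta>" and "\<theta> < pi / 2" and "r0 > 0"
    and "ray_solution a b \<beta> \<theta> r0 f0" and "ray_solution a b \<beta> \<theta> r0 f1"
    and "((\<lambda>r. f0 (ray_pt \<theta> r)) \<longlongrightarrow> 0) at_top"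
    and "((\<lambda>r. f1 (ray_pt \<theta> r)) \<longlongrightarrow> 0) at_top"
  shows "\<exists>C. ((\<lambda>r. (f1 (ray_pt \<theta> r) - f0 (ray_pt \<theta> r))
                  / (exp (- ray_pt \<theta> r) * ray_pt \<theta> r powr \<beta>)) \<longlongrightarrow> C) at_top
           \<and> (C = 0 \<longrightarrow> (\<exists>R. \<forall>r\<ge>R. f1 (ray_pt \<theta> r) = f0 (ray_pt \<theta> r)))"
proof -
  define \<Phi> where "\<Phi> r = (f1 (ray_pt \<theta> r) - f0 (ray_pt \<theta> r)) / ray_weight \<beta> \<theta> r" for r
  obtain L \<kappa> where "\<forall>\<^sub>F r in at_top. (\<Phi> has_vector_derivative \<Phi> r * \<kappa> r) (at r) \<and> cmod (\<kappa> r) \<le> L / r\<^sup>2"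
    using ray_solutions_difference_quotient_ode[OF assms] unfolding \<Phi>_def by blast
  then obtain C where C: "(\<Phi> \<longlongrightarrow> C) at_top" and C0: "C = 0 \<longrightarrow> (\<forall>\<^sub>F r in at_top. \<Phi> r = 0)"
    using linear_ode_limit by blast
  have "\<exists>R. \<forall>r\<ge>R. f1 (ray_pt \<theta> r) = f0 (ray_pt \<theta> r)" if "C = 0"
  proof -
    obtain R where "\<forall>r\<ge>R. \<Phi> r = 0" using C0 \<open>C = 0\<close> unfolding eventually_at_top_linorder by blast
    then show ?thesis
      by (intro exI[of _ "max R 1"]) (auto simp: \<Phi>_def ray_weight_def powr_def ray_pt_def)
  qed
  with C show ?thesis unfolding \<Phi>_def ray_weight_def by blast
qed

end
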